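(* Let $\mathbb{C}=(\mathbf{C},0,\mathbf{D},\mathcal{R})$ be a reactive system with redex RPOs, and let $L$ be an IPO-closed class of arrows (contexts) of $\mathbf{C}$. Then $L$-bisimilarity $\sim^{L}$ is a congruence: for all terms $P,Q:0\to I$ and every arrow $C[-]:I\to J$ of $\mathbf{C}$, if $P\sim^{L}Q$ then $C[P]\sim^{L}C[Q]$.
   Context: A reactive system consists of a category $\mathbf{C}$, a distinguished object $0$, a composition-reflecting subcategory $\mathbf{D}$ of reactive contexts (i.e. $d'\circ d\in\mathbf{D}$ implies $d,d'\in\mathbf{D}$), and a set $\mathcal{R}\subseteq\bigcup_{I}\mathbf{C}(0,I)\times\mathbf{C}(0,I)$ of reduction rules. Terms are arrows with domain $0$; for an arrow $C[-]$ we write $C[P]$ for $C[-]\circ P$. The reduction relation is $P\rightsquigarrow Q$ iff $P=d\circ l$ and $Q=d\circ r$ for some $\langle l,r\rangle\in\mathcal{R}$ and $d\in\mathbf{D}$. Given a commuting square $c_1\circ a_1=c_2\circ a_2$ (with $a_1:K\to I_2$, $a_2:K\to I_3$, $c_1:I_2\to I_4$, $c_2:I_3\to I_4$), a candidate is a tuple $\langle I_5,e,f,g\rangle$ with $e:I_2\to I_5$, $f:I_3\to I_5$, $g:I_5\to I_4$, $e\circ a_1=f\circ a_2$, $g\circ e=c_1$, $g\circ f=c_2$. An RPO is a candidate $\langle I_5,e,f,g\rangle$ such that for every candidate $\langle I_6,e',f',g'\rangle$ there is a unique $h:I_5\to I_6$ with $h\circ e=e'$, $h\circ f=f'$, $g'\circ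 h=g$. The square is an IPO if $\langle I_4,c_1,c_2,\mathrm{id}_{I_4}\rangle$ is an RPO for it. A redex square is a commuting square $C[-]\circ P=d\circ l$ with $P$ a term, $\langle l,r\rangle\in\mathcal{R}$, $d\in\mathbf{D}$; the reactive system has redex RPOs if every redex square has an RPO. The IPO transition system has transitions $P\xrightarrow{C[-]}_I d\circ r$ whenever $d\in\mathbf{D}$, $\langle l,r\rangle\in\mathcal{R}$ and the square $C[-]\circ P=d\circ l$ is an IPO. For a class $L$ of arrows, a symmetric relation $\mathcal{R}'$ on terms is an $L$-bisimulation if whenever $P\,\mathcal{R}'\,Q$ and $P\xrightarrow{C[-]}_I P'$: if $C[-]\in L$ then $Q\xrightarrow{C[-]}_I Q'$ for some $Q'$ with $P'\,\mathcal{R}'\,Q'$; otherwise $C[Q]\rightsquigarrow Q'$ for some $Q'$ with $P'\,\mathcal{R}'\,Q'$. $L$-bisimilarity $\sim^L$ is the largest $L$-bisimulation. $L$ is IPO-closed if whenever a commuting square $b\circ a=d\circ c$ (with $a,c$ having a common domain, $b,d$ a common codomain) is an IPO and $b\in L$, then $c\in L$. *)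

theory Defs
  imports Main
begin

text \<open>A category presented by: a set of arrows Arr (objects are the elements of
  type 'o), domain and codomain maps, composition cmp g f (meaning g after f,
  only meaningful when cd f = dm g) and identities idt.\<close>

definition category ::
  "'a set \<Rightarrow> ('a \<Rightarrow> 'o) \<Rightarrow> ('a \<Rightarrow> 'o) \<Rightarrow> ('a \<Rightarrow> 'a \<Rightarrow> 'a) \<Rightarrow> ('o \<Rightarrow> 'a) \<Rightarrow> bool" where
  "category Arr dm cd cmp idt \<longleftrightarrow>
     (\<forall>x. idt x \<in> Arr \<and> dm (idt x) = x \<and> cd (idt x) = x) \<and>
     (\<forall>f\<in>Arr. \<forall>g\<in>Arr. cd f = dm g \<longrightarrow>
        cmp g f \<in> Arr \<and> dm (cmp g f) = dm f \<and> cd (cmp g f) = cd g) \<and>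
     (\<forall>f\<in>Arr. cmp f (idt (dm f)) = f \<and> cmp (idt (cd f)) f = f) \<and>
     (\<forall>f\<in>Arr. \<forall>g\<in>Arr. \<forall>h\<in>Arr. cd f = dm g \<longrightarrow> cd g = dm h \<longrightarrow>
        cmp h (cmp g f) = cmp (cmp h g) f)"

definition reactive_system ::
  "'a set \<Rightarrow> ('a \<Rightarrow> 'o) \<Rightarrow> ('a \<Rightarrow> 'o) \<Rightarrow> ('a \<Rightarrow> 'a \<Rightarrow> 'a) \<Rightarrow> ('o \<Rightarrow> 'a) \<Rightarrow>
   'o \<Rightarrow> 'a set \<Rightarrow> ('a \<times> 'a) set \<Rightarrow> bool" where
  "reactive_system Arr dm cd cmp idt zero D R \<longleftrightarrow>
     category Arr dm cd cmp idt \<and>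
     D \<subseteq> Arr \<and>
     (\<forall>d\<in>D. \<forall>d'\<in>D. cd d = dm d' \<longrightarrow> cmp d' d \<in> D) \<and>
     (\<forall>d\<in>Arr. \<forall>d'\<in>Arr. cd d = dm d' \<longrightarrow> cmp d' d \<in> D \<longrightarrow> d \<in> D \<and> d' \<in> D) \<and>
     (\<forall>(l, r)\<in>R. l \<in> Arr \<and> r \<in> Arr \<and> dm l = zero \<and> dm r = zero \<and> cd l = cd r)"

definition is_term :: "'a set \<Rightarrow> ('a \<Rightarrow> 'o) \<Rightarrow> 'o \<Rightarrow> 'a \<Rightarrow> bool" where
  "is_term Arr dm zero P \<longleftrightarrow> P \<in> Arr \<and> dm P = zero"

definition reduces ::
  "('a \<Rightarrow> 'o) \<Rightarrow> ('a \<Rightarrow> 'o) \<Rightarrow> ('a \<Rightarrow> 'a \<Rightarrow> 'a) \<Rightarrow> 'a set \<Rightarrow> ('a \<times> 'a) set \<Rightarrow> 'a \<Rightarrow> 'a \<Rightarrow> bool" where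
  "reduces dm cd cmp D R P Q \<longleftrightarrow>
     (\<exists>l r d. (l, r) \<in> R \<and> d \<in> D \<and> cd l = dm d \<and> P = cmp d l \<and> Q = cmp d r)"

definition comm_square ::
  "'a set \<Rightarrow> ('a \<Rightarrow> 'o) \<Rightarrow> ('a \<Rightarrow> 'o) \<Rightarrow> ('a \<Rightarrow> 'a \<Rightarrow> 'a) \<Rightarrow> 'a \<Rightarrow> 'a \<Rightarrow> 'a \<Rightarrow> 'a \<Rightarrow> bool" where
  "comm_square Arr dm cd cmp a1 a2 c1 c2 \<longleftrightarrow>
     a1 \<in> Arr \<and> a2 \<in> Arr \<and> c1 \<in> Arr \<and> c2 \<in> Arr \<and>
     dm a1 = dm a2 \<and> dm c1 = cd a1 \<and> dm c2 = cd a2 \<and> cd c1 = cd c2 \<and>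
     cmp c1 a1 = cmp c2 a2"

text \<open>Candidate (I5, e, f, g) for the square c1 o a1 = c2 o a2; I5 = cd e.\<close>

definition candidate ::
  "'a set \<Rightarrow> ('a \<Rightarrow> 'o) \<Rightarrow> ('a \<Rightarrow> 'o) \<Rightarrow> ('a \<Rightarrow> 'a \<Rightarrow> 'a) \<Rightarrow>
   'a \<Rightarrow> 'a \<Rightarrow> 'a \<Rightarrow> 'a \<Rightarrow> 'a \<Rightarrow> 'a \<Rightarrow> 'a \<Rightarrow> bool" where
  "candidate Arr dm cd cmp a1 a2 c1 c2 e f g \<longleftrightarrow>
     e \<in> Arr \<and> f \<in> Arr \<and> g \<in> Arr \<and>
     dm e = cd a1 \<and> dm f = cd a2 \<and> cd f = cd e \<and> dm g = cd e \<and> cd g = cd c1 \<and>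
     cmp e a1 = cmp f a2 \<and> cmp g e = c1 \<and> cmp g f = c2"

definition RPO ::
  "'a set \<Rightarrow> ('a \<Rightarrow> 'o) \<Rightarrow> ('a \<Rightarrow> 'o) \<Rightarrow> ('a \<Rightarrow> 'a \<Rightarrow> 'a) \<Rightarrow>
   'a \<Rightarrow> 'a \<Rightarrow> 'a \<Rightarrow> 'a \<Rightarrow> 'a \<Rightarrow> 'a \<Rightarrow> 'a \<Rightarrow> bool" where
  "RPO Arr dm cd cmp a1 a2 c1 c2 e f g \<longleftrightarrow>
     candidate Arr dm cd cmp a1 a2 c1 c2 e f g \<and>
     (\<forall>e' f' g'. candidate Arr dm cd cmp a1 a2 c1 c2 e' f' g' \<longrightarrow>
        (\<exists>!h. h \<in> Arr \<and> dm h = cd e \<and> cd h = cd e' \<and>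
              cmp h e = e' \<and> cmp h f = f' \<and> cmp g' h = g))"

definition IPO ::
  "'a set \<Rightarrow> ('a \<Rightarrow> 'o) \<Rightarrow> ('a \<Rightarrow> 'o) \<Rightarrow> ('a \<Rightarrow> 'a \<Rightarrow> 'a) \<Rightarrow> ('o \<Rightarrow> 'a) \<Rightarrow>
   'a \<Rightarrow> 'a \<Rightarrow> 'a \<Rightarrow> 'a \<Rightarrow> bool" where
  "IPO Arr dm cd cmp idt a1 a2 c1 c2 \<longleftrightarrow>
     comm_square Arr dm cd cmp a1 a2 c1 c2 \<and>
     RPO Arr dm cd cmp a1 a2 c1 c2 c1 c2 (idt (cd c1))"

definition has_redex_RPOs ::
  "'a set \<Rightarrow> ('a \<Rightarrow> 'o) \<Rightarrow> ('a \<Rightarrow> 'o) \<Rightarrow> ('a \<Rightarrow> 'a \<Rightarrow> 'a) \<Rightarrow>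
   'o \<Rightarrow> 'a set \<Rightarrow> ('a \<times> 'a) set \<Rightarrow> bool" where
  "has_redex_RPOs Arr dm cd cmp zero D R \<longleftrightarrow>
     (\<forall>C P l r d. is_term Arr dm zero P \<longrightarrow> (l, r) \<in> R \<longrightarrow> d \<in> D \<longrightarrow>
        comm_square Arr dm cd cmp P l C d \<longrightarrow>
        (\<exists>e f g. RPO Arr dm cd cmp P l C d e f g))"

definition ipo_trans ::
  "'a set \<Rightarrow> ('a \<Rightarrow> 'o) \<Rightarrow> ('a \<Rightarrow> 'o) \<Rightarrow> ('a \<Rightarrow> 'a \<Rightarrow> 'a) \<Rightarrow> ('o \<Rightarrow> 'a) \<Rightarrow>
   'a set \<Rightarrow> ('a \<times> 'a) set \<Rightarrow> 'a \<Rightarrow> 'a \<Rightarrow> 'a \<Rightarrow> bool" where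
  "ipo_trans Arr dm cd cmp idt D R P C P' \<longleftrightarrow>
     (\<exists>l r d. d \<in> D \<and> (l, r) \<in> R \<and> IPO Arr dm cd cmp idt P l C d \<and> P' = cmp d r)"

definition L_bisimulation ::
  "'a set \<Rightarrow> ('a \<Rightarrow> 'o) \<Rightarrow> ('a \<Rightarrow> 'o) \<Rightarrow> ('a \<Rightarrow> 'a \<Rightarrow> 'a) \<Rightarrow> ('o \<Rightarrow> 'a) \<Rightarrow>
   'o \<Rightarrow> 'a set \<Rightarrow> ('a \<times> 'a) set \<Rightarrow> 'a set \<Rightarrow> ('a \<Rightarrow> 'a \<Rightarrow> bool) \<Rightarrow> bool" where
  "L_bisimulation Arr dm cd cmp idt zero D R L Rel \<longleftrightarrow>
     (\<forall>P Q. Rel P Q \<longrightarrow> is_term Arr dm zero P \<and> is_term Arr dm zero Q \<and> cd P = cd Q) \<and>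
     (\<forall>P Q. Rel P Q \<longrightarrow> Rel Q P) \<and>
     (\<forall>P Q C P'. Rel P Q \<longrightarrow> ipo_trans Arr dm cd cmp idt D R P C P' \<longrightarrow>
        (if C \<in> L then (\<exists>Q'. ipo_trans Arr dm cd cmp idt D R Q C Q' \<and> Rel P' Q')
         else (\<exists>Q'. reduces dm cd cmp D R (cmp C Q) Q' \<and> Rel P' Q')))"

definition L_bisimilar ::
  "'a set \<Rightarrow> ('a \<Rightarrow> 'o) \<Rightarrow> ('a \<Rightarrow> 'o) \<Rightarrow> ('a \<Rightarrow> 'a \<Rightarrow> 'a) \<Rightarrow> ('o \<Rightarrow> 'a) \<Rightarrow>
   'o \<Rightarrow> 'a set \<Rightarrow> ('a \<times> 'a) set \<Rightarrow> 'a set \<Rightarrow> 'a \<Rightarrow> 'a \<Rightarrow> bool" where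
  "L_bisimilar Arr dm cd cmp idt zero D R L P Q \<longleftrightarrow>
     (\<exists>Rel. L_bisimulation Arr dm cd cmp idt zero D R L Rel \<and> Rel P Q)"

definition IPO_closed ::
  "'a set \<Rightarrow> ('a \<Rightarrow> 'o) \<Rightarrow> ('a \<Rightarrow> 'o) \<Rightarrow> ('a \<Rightarrow> 'a \<Rightarrow> 'a) \<Rightarrow> ('o \<Rightarrow> 'a) \<Rightarrow> 'a set \<Rightarrow> bool" where
  "IPO_closed Arr dm cd cmp idt L \<longleftrightarrow>
     (\<forall>a b c d. IPO Arr dm cd cmp idt a c b d \<longrightarrow> b \<in> L \<longrightarrow> c \<in> L)"

end

theory Submission
  imports Defs
begin

text \<open>
  The context closure of an L-bisimulation, relating C[P] and C[Q] whenever P and Q are related,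
  is again an L-bisimulation. An IPO transition of C[P] with label C' comes from an IPO for the
  square C' \<circ> C \<circ> P = d \<circ> l. The redex RPO of the square with P splits it into an IPO for P, i.e. a
  transition of P with some label e, and an IPO C' \<circ> C = g \<circ> e for the context, where g is reactive
  because D reflects composition. If C' \<in> L then e \<in> L by IPO-closedness, so Q answers with an
  e-transition whose IPO pastes with the context IPO to a C'-transition of C[Q]. Otherwise Q
  answers with a reduction e[Q] \<leadsto> Q'' (an e-transition also yields one), which the reactive context
  g turns into C'[C[Q]] \<leadsto> g[Q''].
\<close>

locale cat =
  fixes Arr :: "'a set" and dm cd :: "'a \<Rightarrow> 'o" and cmp :: "'a \<Rightarrow> 'a \<Rightarrow> 'a"
    and idt :: "'o \<Rightarrow> 'a"
  assumes category: "category Arr dm cd cmp idt"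
begin

lemma idt_in_Arr [simp]: "idt x \<in> Arr"
  and dm_idt [simp]: "dm (idt x) = x"
  and cd_idt [simp]: "cd (idt x) = x"
  using category unfolding category_def by auto

lemma cmp_in_Arr [simp]: "f \<in> Arr \<Longrightarrow> g \<in> Arr \<Longrightarrow> cd f = dm g \<Longrightarrow> cmp g f \<in> Arr"
  and dm_cmp [simp]: "f \<in> Arr \<Longrightarrow> g \<in> Arr \<Longrightarrow> cd f = dm g \<Longrightarrow> dm (cmp g f) = dm f"
  and cd_cmp [simp]: "f \<in> Arr \<Longrightarrow> g \<in> Arr \<Longrightarrow> cd f = dm g \<Longrightarrow> cd (cmp g f) = cd g"
  using category unfolding category_def by auto

lemma cmp_idt_left: "f \<in> Arr \<Longrightarrow> x = cd f \<Longrightarrow> cmp (idt x) f = f"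
  and cmp_idt_right: "f \<in> Arr \<Longrightarrow> x = dm f \<Longrightarrow> cmp f (idt x) = f"
  using category unfolding category_def by auto

lemma cmp_assoc:
  "f \<in> Arr \<Longrightarrow> g \<in> Arr \<Longrightarrow> h \<in> Arr \<Longrightarrow> cd f = dm g \<Longrightarrow> cd g = dm h \<Longrightarrow>
   cmp h (cmp g f) = cmp (cmp h g) f"
  using category unfolding category_def by auto

abbreviation "cand \<equiv> candidate Arr dm cd cmp"
abbreviation "rpo \<equiv> RPO Arr dm cd cmp"
abbreviation "ipo \<equiv> IPO Arr dm cd cmp idt"
abbreviation "square \<equiv> comm_square Arr dm cd cmp"

definition mediates :: "'a \<Rightarrow> 'a \<Rightarrow> 'a \<Rightarrow> 'a \<Rightarrow> 'a \<Rightarrow> 'a \<Rightarrow> 'a \<Rightarrow> bool" where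
  "mediates e f g e' f' g' h \<longleftrightarrow>
     h \<in> Arr \<and> dm h = cd e \<and> cd h = cd e' \<and> cmp h e = e' \<and> cmp h f = f' \<and> cmp g' h = g"

lemma mediatesD:
  assumes "mediates e f g e' f' g' h"
  shows "h \<in> Arr" "dm h = cd e" "cd h = cd e'" "cmp h e = e'" "cmp h f = f'" "cmp g' h = g"
  using assms unfolding mediates_def by auto

lemma RPO_iff:
  "rpo a1 a2 c1 c2 e f g \<longleftrightarrow> cand a1 a2 c1 c2 e f g \<and>
     (\<forall>e' f' g'. cand a1 a2 c1 c2 e' f' g' \<longrightarrow> (\<exists>!h. mediates e f g e' f' g' h))"
  unfolding RPO_def mediates_def ..

lemma RPO_candidate: "rpo a1 a2 c1 c2 e f g \<Longrightarrow> cand a1 a2 c1 c2 e f g"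
  unfolding RPO_def by blast

lemma RPO_mediator:
  assumes "rpo a1 a2 c1 c2 e f g" and "cand a1 a2 c1 c2 e' f' g'"
  obtains h where "mediates e f g e' f' g' h"
  using assms unfolding RPO_iff by blast

lemma RPO_mediator_unique:
  "rpo a1 a2 c1 c2 e f g \<Longrightarrow> cand a1 a2 c1 c2 e' f' g' \<Longrightarrow>
   mediates e f g e' f' g' h1 \<Longrightarrow> mediates e f g e' f' g' h2 \<Longrightarrow> h1 = h2"
  unfolding RPO_iff by blast

lemma IPO_square: "ipo a1 a2 c1 c2 \<Longrightarrow> square a1 a2 c1 c2"
  and IPO_RPO: "ipo a1 a2 c1 c2 \<Longrightarrow> rpo a1 a2 c1 c2 c1 c2 (idt (cd c1))"
  unfolding IPO_def by auto

lemma IPO_intro: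
  assumes "square a1 a2 c1 c2"
    and "\<And>e' f' g'. cand a1 a2 c1 c2 e' f' g' \<Longrightarrow> \<exists>h. mediates c1 c2 (idt (cd c1)) e' f' g' h"
    and "\<And>e' f' g' h1 h2. cand a1 a2 c1 c2 e' f' g' \<Longrightarrow>
       mediates c1 c2 (idt (cd c1)) e' f' g' h1 \<Longrightarrow> mediates c1 c2 (idt (cd c1)) e' f' g' h2 \<Longrightarrow>
       h1 = h2"
  shows "ipo a1 a2 c1 c2"
proof -
  have "cand a1 a2 c1 c2 c1 c2 (idt (cd c1))"
    using assms(1) unfolding comm_square_def candidate_def by (auto simp: cmp_idt_left)
  then show ?thesis
    using assms unfolding IPO_def RPO_iff by blast
qed

lemma RPO_square_is_IPO:
  assumes square: "square a1 a2 c1 c2" and rpo: "rpo a1 a2 c1 c2 e f g"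
  shows "ipo a1 a2 e f"
proof -
  have c: "cand a1 a2 c1 c2 e f g" using rpo by (rule RPO_candidate)
  then have rpo_cand: "e \<in> Arr" "f \<in> Arr" "g \<in> Arr" "dm e = cd a1" "dm f = cd a2" "cd f = cd e"
    "dm g = cd e" "cd g = cd c1" "cmp e a1 = cmp f a2" "cmp g e = c1" "cmp g f = c2"
    unfolding candidate_def by auto
  have id_med: "mediates e f g e f g (idt (cd e))"
    using rpo_cand unfolding mediates_def by (simp add: cmp_idt_left cmp_idt_right)
  have extend: "cand a1 a2 c1 c2 e' f' (cmp g g')" if "cand a1 a2 e f e' f' g'" for e' f' g'
    using that rpo_cand unfolding candidate_def by (auto simp: cmp_assoc[symmetric])
  show ?thesis
  proof (rule IPO_intro)
    show "square a1 a2 e f" using square rpo_cand unfolding comm_square_def by auto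
  next
    fix e' f' g' assume c': "cand a1 a2 e f e' f' g'"
    then have x: "e' \<in> Arr" "g' \<in> Arr" "dm g' = cd e'" "cd g' = cd e" "cmp g' e' = e" "cmp g' f' = f"
      unfolding candidate_def by auto
    obtain h where h: "mediates e f g e' f' (cmp g g') h"
      using RPO_mediator[OF rpo extend[OF c']] .
    have "mediates e f g e f g (cmp g' h)"
      using mediatesD[OF h] rpo_cand x unfolding mediates_def by (simp add: cmp_assoc[symmetric])
    then have "cmp g' h = idt (cd e)"
      using RPO_mediator_unique[OF rpo c _ id_med] by blast
    then show "\<exists>h. mediates e f (idt (cd e)) e' f' g' h"
      using h unfolding mediates_def by blast
  next
    fix e' f' g' h1 h2 assume c': "cand a1 a2 e f e' f' g'"
      and h: "mediates e f (idt (cd e)) e' f' g' h1" "mediates e f (idt (cd e)) e' f' g' h2"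
    then have x: "g' \<in> Arr" "dm g' = cd e'" "cd g' = cd e"
      unfolding candidate_def by auto
    have "mediates e f g e' f' (cmp g g') h1" "mediates e f g e' f' (cmp g g') h2"
      using mediatesD[OF h(1)] mediatesD[OF h(2)] rpo_cand x unfolding mediates_def
      by (simp_all add: cmp_assoc[symmetric] cmp_idt_right)
    then show "h1 = h2" using RPO_mediator_unique[OF rpo extend[OF c']] by blast
  qed
qed

lemma IPO_right_square:
  assumes outer: "ipo (cmp C P) l C' d" and rpo: "rpo P l (cmp C' C) d e f g"
    and CP: "C \<in> Arr" "P \<in> Arr" "cd P = dm C"
  shows "ipo C e C' g"
proof -
  have outer_rpo: "rpo (cmp C P) l C' d C' d (idt (cd C'))" using outer by (rule IPO_RPO)
  have outer_sq: "l \<in> Arr" "C' \<in> Arr" "d \<in> Arr" "dm C' = cd C" "dm d = cd l" "cd C' = cd d"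
    using IPO_square[OF outer] CP unfolding comm_square_def by auto
  have rpo_cand: "e \<in> Arr" "f \<in> Arr" "g \<in> Arr" "dm e = cd P" "dm f = cd l" "cd f = cd e"
    "dm g = cd e" "cd g = cd C'" "cmp e P = cmp f l" "cmp g e = cmp C' C" "cmp g f = d"
    using RPO_candidate[OF rpo] CP outer_sq unfolding candidate_def by auto
  have lift: "cand (cmp C P) l C' d e' (cmp f' f) g' \<and> cand P l (cmp C' C) d (cmp f' e) (cmp f' f) g'"
    if "cand C e C' g e' f' g'" for e' f' g'
  proof -
    have x: "e' \<in> Arr" "f' \<in> Arr" "g' \<in> Arr" "dm e' = cd C" "dm f' = cd e" "cd f' = cd e'"
      "dm g' = cd e'" "cd g' = cd C'" "cmp e' C = cmp f' e" "cmp g' e' = C'" "cmp g' f' = g"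
      using that unfolding candidate_def by auto
    have "cmp (cmp f' e) P = cmp f' (cmp e P)" by (rule cmp_assoc[symmetric]) (use x rpo_cand CP in auto)
    also have "\<dots> = cmp (cmp f' f) l" using x rpo_cand outer_sq by (simp add: cmp_assoc)
    finally have fe: "cmp (cmp f' e) P = cmp (cmp f' f) l" .
    have "cmp e' (cmp C P) = cmp (cmp e' C) P" by (rule cmp_assoc) (use x CP in auto)
    then have "cmp e' (cmp C P) = cmp (cmp f' f) l" using x fe by simp
    moreover note fe
    ultimately show ?thesis
      using rpo_cand x outer_sq CP unfolding candidate_def by (simp add: cmp_assoc)
  qed
  show ?thesis
  proof (rule IPO_intro)
    show "square C e C' g" using rpo_cand outer_sq CP unfolding comm_square_def by auto
  next
    fix e' f' g' assume c': "cand C e C' g e' f' g'"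
    then have x: "e' \<in> Arr" "f' \<in> Arr" "g' \<in> Arr" "dm f' = cd e" "cd f' = cd e'"
      "dm g' = cd e'" "cmp e' C = cmp f' e" "cmp g' f' = g"
      unfolding candidate_def by auto
    obtain h where h: "mediates C' d (idt (cd C')) e' (cmp f' f) g' h"
      using RPO_mediator[OF outer_rpo] lift[OF c'] by blast
    note h = mediatesD[OF h]
    have "cmp (cmp h g) e = cmp h (cmp C' C)" by (metis cmp_assoc rpo_cand(1,3,7,8,10) h(1,2) outer_sq(6))
    also have "\<dots> = cmp (cmp h C') C" by (rule cmp_assoc) (use CP outer_sq h in auto)
    finally have hge: "cmp (cmp h g) e = cmp f' e" using h x by simp
    have hgf: "cmp (cmp h g) f = cmp f' f" by (metis cmp_assoc rpo_cand(2,3,6,7,8,11) h(1,2,5) outer_sq(6))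
    have "mediates e f g (cmp f' e) (cmp f' f) g' (cmp h g)" "mediates e f g (cmp f' e) (cmp f' f) g' f'"
      using h rpo_cand outer_sq x hge hgf unfolding mediates_def by (simp_all add: cmp_assoc cmp_idt_left)
    then have "cmp h g = f'"
      using RPO_mediator_unique[OF rpo] lift[OF c'] by blast
    then have "mediates C' g (idt (cd C')) e' f' g' h"
      using h unfolding mediates_def by simp
    then show "\<exists>h. mediates C' g (idt (cd C')) e' f' g' h" ..
  next
    fix e' f' g' h1 h2 assume c': "cand C e C' g e' f' g'"
      and h: "mediates C' g (idt (cd C')) e' f' g' h1" "mediates C' g (idt (cd C')) e' f' g' h2"
    have "mediates C' d (idt (cd C')) e' (cmp f' f) g' h" if "mediates C' g (idt (cd C')) e' f' g' h" for h
    proof -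
      note h = mediatesD[OF that]
      have "cmp h d = cmp h (cmp g f)" using rpo_cand(11) by simp
      also have "\<dots> = cmp (cmp h g) f" by (rule cmp_assoc) (simp_all add: rpo_cand(2,3,6,7,8) h(1,2) outer_sq(6))
      also have "\<dots> = cmp f' f" using h(5) by simp
      finally show ?thesis using h(1-4,6) unfolding mediates_def by simp
    qed
    note this[OF h(1)] this[OF h(2)]
    then show "h1 = h2"
      using RPO_mediator_unique[OF outer_rpo] lift[OF c'] by blast
  qed
qed

lemma square_paste:
  assumes "square Q l' e f'" and "square C e C' g"
  shows "square Q l' (cmp C' C) (cmp g f')"
proof -
  have left_sq: "Q \<in> Arr" "l' \<in> Arr" "e \<in> Arr" "f' \<in> Arr" "dm Q = dm l'" "dm e = cd Q" "dm f' = cd l'"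
    "cd e = cd f'" "cmp e Q = cmp f' l'"
    using assms(1) unfolding comm_square_def by auto
  have right_sq: "C \<in> Arr" "C' \<in> Arr" "g \<in> Arr" "dm C = dm e" "dm C' = cd C" "dm g = cd e" "cd C' = cd g"
    "cmp C' C = cmp g e"
    using assms(2) unfolding comm_square_def by auto
  have "cmp (cmp C' C) Q = cmp g (cmp f' l')" using left_sq right_sq by (simp add: cmp_assoc flip: left_sq(9))
  also have "\<dots> = cmp (cmp g f') l'" using left_sq right_sq by (simp add: cmp_assoc)
  finally show ?thesis using left_sq right_sq unfolding comm_square_def by simp
qed

lemma IPO_paste:
  assumes left: "ipo Q l' e f'" and right: "ipo C e C' g"
    and rpo: "rpo Q l' (cmp C' C) (cmp g f') e0 f0 g0"
  shows "ipo (cmp C Q) l' C' (cmp g f')"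
proof -
  have left_rpo: "rpo Q l' e f' e f' (idt (cd e))" using left by (rule IPO_RPO)
  have right_rpo: "rpo C e C' g C' g (idt (cd C'))" using right by (rule IPO_RPO)
  have left_sq: "Q \<in> Arr" "l' \<in> Arr" "e \<in> Arr" "f' \<in> Arr" "dm Q = dm l'" "dm e = cd Q" "dm f' = cd l'"
    "cd e = cd f'" "cmp e Q = cmp f' l'"
    using IPO_square[OF left] unfolding comm_square_def by auto
  have right_sq: "C \<in> Arr" "C' \<in> Arr" "g \<in> Arr" "dm C = dm e" "dm C' = cd C" "dm g = cd e" "cd C' = cd g"
    "cmp C' C = cmp g e"
    using IPO_square[OF right] unfolding comm_square_def by auto
  have rpo_cand: "e0 \<in> Arr" "f0 \<in> Arr" "dm e0 = cd Q" "dm f0 = cd l'" "cd f0 = cd e0"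
    "cmp e0 Q = cmp f0 l'"
    using RPO_candidate[OF rpo] unfolding candidate_def by auto
  have "cmp C' (cmp C Q) = cmp (cmp C' C) Q" using left_sq right_sq by (simp add: cmp_assoc)
  also have "\<dots> = cmp (cmp g f') l'"
    using square_paste[OF IPO_square[OF left] IPO_square[OF right]] unfolding comm_square_def by simp
  finally have outer: "cmp C' (cmp C Q) = cmp (cmp g f') l'" .
  have "cand Q l' (cmp C' C) (cmp g f') e f' g"
    using left_sq right_sq unfolding candidate_def by auto
  then obtain k1 where k1: "mediates e0 f0 g0 e f' g k1"
    using RPO_mediator[OF rpo] by blast
  note k1 = mediatesD[OF k1]
  have "cand Q l' e f' e0 f0 k1"
    using left_sq rpo_cand k1 unfolding candidate_def by auto
  then obtain j where j: "mediates e f' (idt (cd e)) e0 f0 k1 j"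
    using RPO_mediator[OF left_rpo] by blast
  note j = mediatesD[OF j]
  \<comment> \<open>k1 compares the RPO with the left IPO and j goes back, with k1 \<circ> j = id; composing the
      RPO mediator of an outer candidate with j factors that candidate through the right square.\<close>
  have through_right: "\<exists>f1. cand C e C' g e' f1 g' \<and> cmp f1 f' = f'' \<and>
      (\<forall>h. mediates C' (cmp g f') (idt (cd C')) e' f'' g' h \<longrightarrow> cmp h g = f1)"
    if c': "cand (cmp C Q) l' C' (cmp g f') e' f'' g'" for e' f'' g'
  proof -
    have x: "e' \<in> Arr" "f'' \<in> Arr" "g' \<in> Arr" "dm e' = cd C" "dm f'' = cd l'" "cd f'' = cd e'"
      "dm g' = cd e'" "cd g' = cd C'" "cmp e' (cmp C Q) = cmp f'' l'" "cmp g' e' = C'"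
      "cmp g' f'' = cmp g f'"
      using c' left_sq right_sq unfolding candidate_def by auto
    have cc: "cand Q l' (cmp C' C) (cmp g f') (cmp e' C) f'' g'"
      using left_sq right_sq x unfolding candidate_def by (auto simp: cmp_assoc[symmetric])
    obtain k3 where k3: "mediates e0 f0 g0 (cmp e' C) f'' g' k3"
      using RPO_mediator[OF rpo cc] .
    note k3' = mediatesD[OF k3]
    define f1 where "f1 = cmp k3 j"
    have f1: "f1 \<in> Arr" "dm f1 = cd e" "cd f1 = cd e'" using j k3' right_sq x unfolding f1_def by auto
    have f1e: "cmp f1 e = cmp e' C" using j k3' left_sq unfolding f1_def by (simp add: cmp_assoc[symmetric])
    have f1f: "cmp f1 f' = f''" using j k3' left_sq unfolding f1_def by (simp add: cmp_assoc[symmetric])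
    have "cmp g' f1 = cmp (cmp g' k3) j" using j k3' rpo_cand right_sq x unfolding f1_def by (simp add: cmp_assoc)
    also have "\<dots> = cmp (cmp g k1) j" using k1 k3' by simp
    also have "\<dots> = cmp g (cmp k1 j)" by (rule cmp_assoc[symmetric]) (use j k1 right_sq in auto)
    also have "\<dots> = g" using j right_sq by (simp add: cmp_idt_right)
    finally have f1g: "cmp g' f1 = g" .
    have "cand C e C' g e' f1 g'" using x f1 f1e f1g right_sq left_sq unfolding candidate_def by auto
    moreover have "cmp h g = f1" if h: "mediates C' (cmp g f') (idt (cd C')) e' f'' g' h" for h
    proof -
      note h = mediatesD[OF h]
      define m where "m = cmp (cmp h g) k1"
      have hg: "cmp h g \<in> Arr" "dm (cmp h g) = cd e" "cd (cmp h g) = cd e'" using h right_sq by simp_all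
      have "cmp m e0 = cmp (cmp h g) (cmp k1 e0)"
        unfolding m_def by (rule cmp_assoc[symmetric]) (simp_all add: hg k1 rpo_cand)
      also have "\<dots> = cmp h (cmp g e)"
        using k1(4) by simp (rule cmp_assoc[symmetric], simp_all add: left_sq right_sq h)
      also have "\<dots> = cmp (cmp h C') C"
        unfolding right_sq(8)[symmetric] by (rule cmp_assoc) (simp_all add: right_sq h)
      finally have me: "cmp m e0 = cmp e' C" using h by simp
      have "cmp m f0 = cmp (cmp h g) (cmp k1 f0)"
        unfolding m_def by (rule cmp_assoc[symmetric]) (simp_all add: hg k1 rpo_cand)
      also have "\<dots> = cmp h (cmp g f')"
        using k1(5) by simp (rule cmp_assoc[symmetric], simp_all add: left_sq right_sq h)
      finally have mf: "cmp m f0 = f''" using h by simp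
      have "cmp g' m = cmp (cmp g' (cmp h g)) k1"
        unfolding m_def by (rule cmp_assoc) (simp_all add: hg k1 x)
      also have "\<dots> = cmp (cmp (cmp g' h) g) k1" using right_sq h x by (simp add: cmp_assoc)
      also have "\<dots> = g0" using h k1 right_sq by (simp add: cmp_idt_left)
      finally have mg: "cmp g' m = g0" .
      have "mediates e0 f0 g0 (cmp e' C) f'' g' m"
        using h k1 right_sq x me mf mg unfolding m_def mediates_def by simp
      then have "m = k3" using RPO_mediator_unique[OF rpo cc k3] by blast
      have "cmp h g = cmp (cmp h g) (cmp k1 j)" using h right_sq j by (simp add: cmp_idt_right)
      also have "\<dots> = cmp m j"
        unfolding m_def by (rule cmp_assoc) (simp_all add: hg j k1)
      finally show ?thesis using \<open>m = k3\<close> unfolding f1_def by simp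
    qed
    ultimately show ?thesis using f1f by blast
  qed
  show ?thesis
  proof (rule IPO_intro)
    show "square (cmp C Q) l' C' (cmp g f')" using left_sq right_sq outer unfolding comm_square_def by auto
  next
    fix e' f'' g' assume "cand (cmp C Q) l' C' (cmp g f') e' f'' g'"
    then obtain f1 where f1: "cand C e C' g e' f1 g'" "cmp f1 f' = f''"
      using through_right by blast
    obtain h where h: "mediates C' g (idt (cd C')) e' f1 g' h"
      using RPO_mediator[OF right_rpo f1(1)] .
    note h = mediatesD[OF h]
    have "mediates C' (cmp g f') (idt (cd C')) e' f'' g' h"
      using h left_sq right_sq f1(2) unfolding mediates_def by (simp add: cmp_assoc)
    then show "\<exists>h. mediates C' (cmp g f') (idt (cd C')) e' f'' g' h" ..
  next
    fix e' f'' g' h1 h2 assume "cand (cmp C Q) l' C' (cmp g f') e' f'' g'"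
      and h: "mediates C' (cmp g f') (idt (cd C')) e' f'' g' h1"
        "mediates C' (cmp g f') (idt (cd C')) e' f'' g' h2"
    then obtain f1 where f1: "cand C e C' g e' f1 g'" "cmp h1 g = f1" "cmp h2 g = f1"
      using through_right by blast
    have "mediates C' g (idt (cd C')) e' f1 g' h1" "mediates C' g (idt (cd C')) e' f1 g' h2"
      using mediatesD[OF h(1)] mediatesD[OF h(2)] f1(2,3) unfolding mediates_def by simp_all
    then show "h1 = h2" using RPO_mediator_unique[OF right_rpo f1(1)] by blast
  qed
qed

end

locale reactive =
  fixes Arr :: "'a set" and dm cd :: "'a \<Rightarrow> 'o" and cmp :: "'a \<Rightarrow> 'a \<Rightarrow> 'a"
    and idt :: "'o \<Rightarrow> 'a" and zero :: 'o and D :: "'a set" and R :: "('a \<times> 'a) set"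
  assumes reactive_system: "reactive_system Arr dm cd cmp idt zero D R"
begin

sublocale cat Arr dm cd cmp idt
  using reactive_system unfolding reactive_system_def by unfold_locales blast

lemma D_subset_Arr: "D \<subseteq> Arr"
  and D_cmp_closed: "d \<in> D \<Longrightarrow> d' \<in> D \<Longrightarrow> cd d = dm d' \<Longrightarrow> cmp d' d \<in> D"
  and D_cmp_reflect: "d \<in> Arr \<Longrightarrow> d' \<in> Arr \<Longrightarrow> cd d = dm d' \<Longrightarrow> cmp d' d \<in> D \<Longrightarrow> d \<in> D \<and> d' \<in> D"
  and rule_typing: "(l, r) \<in> R \<Longrightarrow> l \<in> Arr \<and> r \<in> Arr \<and> dm l = zero \<and> dm r = zero \<and> cd l = cd r"
  using reactive_system unfolding reactive_system_def by blast+

abbreviation "ipo_step \<equiv> ipo_trans Arr dm cd cmp idt D R"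
abbreviation "red \<equiv> reduces dm cd cmp D R"

lemma reduces_in_context:
  assumes "red P P'" and "g \<in> D" and "dm g = cd P"
  shows "red (cmp g P) (cmp g P')"
proof -
  obtain l r d where lr: "(l, r) \<in> R" "d \<in> D" "cd l = dm d" "P = cmp d l" "P' = cmp d r"
    using assms(1) unfolding reduces_def by blast
  have ty: "l \<in> Arr" "r \<in> Arr" "d \<in> Arr" "g \<in> Arr" "cd r = cd l" "cd d = dm g"
    using rule_typing[OF lr(1)] lr D_subset_Arr assms by auto
  have "cmp g d \<in> D" using D_cmp_closed[OF lr(2) assms(2)] ty by simp
  moreover have "cd l = dm (cmp g d)" using lr ty by simp
  moreover have "cmp g P = cmp (cmp g d) l" "cmp g P' = cmp (cmp g d) r"
    using lr ty by (simp_all add: cmp_assoc)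
  ultimately show ?thesis
    using lr(1) unfolding reduces_def by blast
qed

lemma ipo_step_imp_reduces:
  assumes "ipo_step P C P'"
  shows "red (cmp C P) P'"
proof -
  obtain l r d where step: "d \<in> D" "(l, r) \<in> R" "ipo P l C d" "P' = cmp d r"
    using assms unfolding ipo_trans_def by blast
  have "cd l = dm d" "cmp C P = cmp d l"
    using IPO_square[OF step(3)] unfolding comm_square_def by simp_all
  then show ?thesis
    using step unfolding reduces_def by blast
qed

end

locale reactive_redex_RPOs = reactive +
  assumes redex_RPOs: "has_redex_RPOs Arr dm cd cmp zero D R"
begin

lemma ipo_step_in_context_decompose:
  assumes P: "is_term Arr dm zero P" and C: "C \<in> Arr" "dm C = cd P"
    and tr: "ipo_step (cmp C P) C' X'"
  obtains e g P'' where "ipo_step P e P''" "ipo C e C' g" "g \<in> D" "dm g = cd P''"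
    "X' = cmp g P''"
proof -
  obtain l r d where step: "d \<in> D" "(l, r) \<in> R" "ipo (cmp C P) l C' d" "X' = cmp d r"
    using tr unfolding ipo_trans_def by blast
  have lr: "l \<in> Arr" "r \<in> Arr" "dm l = zero" "cd l = cd r" using rule_typing[OF step(2)] by auto
  have PA: "P \<in> Arr" "dm P = zero" using P unfolding is_term_def by auto
  have outer_sq: "C' \<in> Arr" "d \<in> Arr" "dm C' = cd C" "dm d = cd l" "cd C' = cd d"
    "cmp C' (cmp C P) = cmp d l"
    using IPO_square[OF step(3)] C PA unfolding comm_square_def by auto
  have "cmp (cmp C' C) P = cmp d l" using outer_sq C PA by (simp add: cmp_assoc)
  then have "square P l (cmp C' C) d"
    using outer_sq C PA lr unfolding comm_square_def by simp
  then obtain e f g where rpo: "rpo P l (cmp C' C) d e f g"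
    using redex_RPOs P step(1,2) unfolding has_redex_RPOs_def by blast
  have right: "ipo C e C' g" by (rule IPO_right_square[OF step(3) rpo]) (use C PA in auto)
  have left: "ipo P l e f" by (rule RPO_square_is_IPO[OF \<open>square P l (cmp C' C) d\<close> rpo])
  have rpo_cand: "f \<in> Arr" "g \<in> Arr" "dm f = cd l" "cd f = cd e" "dm g = cd e" "cmp g f = d"
    using RPO_candidate[OF rpo] unfolding candidate_def by auto
  have fg: "f \<in> D" "g \<in> D" using D_cmp_reflect[of f g] rpo_cand step(1) by auto
  have "ipo_step P e (cmp f r)" unfolding ipo_trans_def using fg(1) step(2) left by blast
  moreover have "X' = cmp g (cmp f r)" using step(4) rpo_cand lr by (simp add: cmp_assoc)
  moreover have "dm g = cd (cmp f r)" using rpo_cand lr by simp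
  ultimately show ?thesis using that right fg(2) by blast
qed

lemma ipo_step_in_context_compose:
  assumes Q: "is_term Arr dm zero Q" and tr: "ipo_step Q e Q''" and right: "ipo C e C' g" and g: "g \<in> D"
  shows "ipo_step (cmp C Q) C' (cmp g Q'')"
proof -
  obtain l' r' f' where step: "f' \<in> D" "(l', r') \<in> R" "ipo Q l' e f'" "Q'' = cmp f' r'"
    using tr unfolding ipo_trans_def by blast
  have lr: "r' \<in> Arr" "cd l' = cd r'" using rule_typing[OF step(2)] by auto
  have sq: "square Q l' (cmp C' C) (cmp g f')"
    using square_paste[OF IPO_square[OF step(3)] IPO_square[OF right]] .
  have ty: "f' \<in> Arr" "dm f' = cd l'" "cd f' = cd e" "dm g = cd e" "g \<in> Arr"
    using IPO_square[OF step(3)] IPO_square[OF right] unfolding comm_square_def by auto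
  have gf': "cmp g f' \<in> D" using D_cmp_closed[OF step(1) g] ty by simp
  then obtain e0 f0 g0 where "rpo Q l' (cmp C' C) (cmp g f') e0 f0 g0"
    using redex_RPOs Q step(2) sq unfolding has_redex_RPOs_def by blast
  then have "ipo (cmp C Q) l' C' (cmp g f')" by (rule IPO_paste[OF step(3) right])
  moreover have "cmp g Q'' = cmp (cmp g f') r'" using step(4) ty lr by (simp add: cmp_assoc)
  ultimately show ?thesis using gf' step(2) unfolding ipo_trans_def by blast
qed

definition context_closure :: "('a \<Rightarrow> 'a \<Rightarrow> bool) \<Rightarrow> 'a \<Rightarrow> 'a \<Rightarrow> bool" where
  "context_closure B X Y \<longleftrightarrow>
     (\<exists>C P Q. B P Q \<and> C \<in> Arr \<and> dm C = cd P \<and> X = cmp C P \<and> Y = cmp C Q)"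

lemma L_bisimulation_context_closure:
  assumes closed: "IPO_closed Arr dm cd cmp idt L"
    and bisim: "L_bisimulation Arr dm cd cmp idt zero D R L B"
  shows "L_bisimulation Arr dm cd cmp idt zero D R L (context_closure B)"
proof -
  have B_terms: "is_term Arr dm zero P \<and> is_term Arr dm zero Q \<and> cd P = cd Q" if "B P Q" for P Q
    using bisim that unfolding L_bisimulation_def by blast
  have B_sym: "B Q P" if "B P Q" for P Q
    using bisim that unfolding L_bisimulation_def by blast
  have B_sim: "if C \<in> L then \<exists>Q'. ipo_step Q C Q' \<and> B P' Q' else \<exists>Q'. red (cmp C Q) Q' \<and> B P' Q'"
    if "B P Q" "ipo_step P C P'" for P Q C P'
    using bisim that unfolding L_bisimulation_def by blast
  have terms: "is_term Arr dm zero X \<and> is_term Arr dm zero Y \<and> cd X = cd Y"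
    if "context_closure B X Y" for X Y
    using that B_terms unfolding context_closure_def is_term_def by auto
  have sym: "context_closure B Y X" if "context_closure B X Y" for X Y
    using that B_sym B_terms unfolding context_closure_def by metis
  have sim: "if C' \<in> L then \<exists>Y'. ipo_step Y C' Y' \<and> context_closure B X' Y'
             else \<exists>Y'. red (cmp C' Y) Y' \<and> context_closure B X' Y'"
    if "context_closure B X Y" and tr: "ipo_step X C' X'" for X Y C' X'
  proof -
    obtain C P Q where PQ: "B P Q" "C \<in> Arr" "dm C = cd P" "X = cmp C P" "Y = cmp C Q"
      using \<open>context_closure B X Y\<close> unfolding context_closure_def by blast
    have P: "is_term Arr dm zero P" and Q: "is_term Arr dm zero Q" and "cd P = cd Q"
      using B_terms[OF PQ(1)] by auto
    obtain e g P'' where P'': "ipo_step P e P''" "ipo C e C' g" "g \<in> D" "dm g = cd P''"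
      "X' = cmp g P''"
      using ipo_step_in_context_decompose[OF P PQ(2,3)] tr PQ(4) by blast
    obtain Q'' where Q'': "B P'' Q''" "e \<in> L \<Longrightarrow> ipo_step Q e Q''" "red (cmp e Q) Q''"
      using B_sim[OF PQ(1) P''(1)] ipo_step_imp_reduces by (cases "e \<in> L") auto
    have related: "context_closure B X' (cmp g Q'')"
      unfolding context_closure_def using Q''(1) P''(3-5) D_subset_Arr by blast
    show ?thesis
    proof (cases "C' \<in> L")
      case True
      then have "e \<in> L" using closed P''(2) unfolding IPO_closed_def by blast
      then have "ipo_step Y C' (cmp g Q'')"
        using ipo_step_in_context_compose[OF Q Q''(2) P''(2,3)] PQ(5) by blast
      then show ?thesis using True related by auto
    next
      case False
      have sq: "C' \<in> Arr" "e \<in> Arr" "g \<in> Arr" "dm C' = cd C" "dm e = dm C" "dm g = cd e"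
        "cmp C' C = cmp g e"
        using IPO_square[OF P''(2)] unfolding comm_square_def by auto
      have QA: "Q \<in> Arr" "cd Q = dm C" using Q PQ(3) \<open>cd P = cd Q\<close> unfolding is_term_def by auto
      have "cmp C' Y = cmp (cmp g e) Q" using sq PQ(2,5) QA by (simp add: cmp_assoc flip: sq(7))
      also have "\<dots> = cmp g (cmp e Q)" using sq QA by (simp add: cmp_assoc)
      finally have "cmp C' Y = cmp g (cmp e Q)" .
      moreover have "red (cmp g (cmp e Q)) (cmp g Q'')"
        using reduces_in_context[OF Q''(3) P''(3)] sq QA by simp
      ultimately show ?thesis using False related by auto
    qed
  qed
  show ?thesis
    unfolding L_bisimulation_def using terms sym sim by blast
qed

end

theorem mainTheorem1:
  fixes Arr :: "'a set" and dm cd :: "'a \<Rightarrow> 'o" and cmp :: "'a \<Rightarrow> 'a \<Rightarrow> 'a"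
    and idt :: "'o \<Rightarrow> 'a" and zero :: 'o and D :: "'a set" and R :: "('a \<times> 'a) set"
    and L :: "'a set"
  assumes "reactive_system Arr dm cd cmp idt zero D R"
    and "has_redex_RPOs Arr dm cd cmp zero D R"
    and "L \<subseteq> Arr"
    and "IPO_closed Arr dm cd cmp idt L"
  shows "\<forall>P Q C. is_term Arr dm zero P \<longrightarrow> is_term Arr dm zero Q \<longrightarrow> cd Q = cd P \<longrightarrow>
           C \<in> Arr \<longrightarrow> dm C = cd P \<longrightarrow>
           L_bisimilar Arr dm cd cmp idt zero D R L P Q \<longrightarrow>
           L_bisimilar Arr dm cd cmp idt zero D R L (cmp C P) (cmp C Q)"
proof (intro allI impI)
  interpret reactive_redex_RPOs Arr dm cd cmp idt zero D R
    using assms(1,2) by unfold_locales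
  fix P Q C
  assume "C \<in> Arr" "dm C = cd P" "L_bisimilar Arr dm cd cmp idt zero D R L P Q"
  then obtain B where B: "L_bisimulation Arr dm cd cmp idt zero D R L B"
    and "context_closure B (cmp C P) (cmp C Q)"
    unfolding L_bisimilar_def context_closure_def by blast
  then show "L_bisimilar Arr dm cd cmp idt zero D R L (cmp C P) (cmp C Q)"
    using L_bisimulation_context_closure[OF assms(4) B] unfolding L_bisimilar_def by blast
qed

end
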